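(* Let $\lambda\in(1,\infty)\setminus\mathbb{N}$ and let $\phi:[0,1]\to(0,1]$ be a non-increasing function with $\phi(0)=1$ (so that $\omega(x)=\phi(|x|)$ for $|x|\le1$, $\omega(x)=0$ otherwise, is positive on its support $[-1,1]$). Then the subdivision scheme $S_{1,\mathbf{w}^\lambda}$ is uniformly convergent.
   Context: Put $w^\lambda_m=\phi(|m|/\lambda)$ for $m\in\mathbb{Z}$ with $|m|<\lambda$, and for $i\in\{0,1\}$ let $M_i=\{m\in\mathbb{Z}: m\equiv i \pmod 2,\ |m|<\lambda\}$. The scheme $S_{1,\mathbf{w}^\lambda}$ is the weighted local polynomial regression scheme of degree $1$: $(S\mathbf{f})_{2j+i}=\hat p(0)$ where $\hat p$ minimizes $\sum_{m\in M_i} w^\lambda_m (f_{j+(m+i)/2}-p(m))^2$ over polynomials $p$ of degree at most $1$ (it coincides with the degree-$0$ scheme). Explicitly, for $\mathbf{f}=(f_j)_{j\in\mathbb{Z}}$, $i\in\{0,1\}$, $j\in\mathbb{Z}$, \[ (S_{1,\mathbf{w}^\lambda}\mathbf{f})_{2j+i}=\frac{\sum_{m\in M_i} w^\lambda_m f_{j+(m+i)/2}}{\sum_{m\in M_i} w^\lambda_m}. \] Uniform convergence: for every bounded real sequence $\mathbf{f}^0$ there is a continuous $F$ with $\lim_{k\to\infty}\sup_j|(S^k\mathbf{f}^0)_j-F(2^{-k}j)|=0$. *)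

theory Defs
  imports "HOL-Analysis.Analysis"
begin

definition wlam :: "real \<Rightarrow> (real \<Rightarrow> real) \<Rightarrow> int \<Rightarrow> real" where
  "wlam lam phi m = phi (\<bar>real_of_int m\<bar> / lam)"

definition Mset :: "real \<Rightarrow> int \<Rightarrow> int set" where
  "Mset lam i = {m::int. m mod 2 = i mod 2 \<and> \<bar>real_of_int m\<bar> < lam}"

definition Sstep :: "real \<Rightarrow> (real \<Rightarrow> real) \<Rightarrow> (int \<Rightarrow> real) \<Rightarrow> int \<Rightarrow> real" where
  "Sstep lam phi f n =
     (let i = n mod 2; j = n div 2 in
        (\<Sum>m\<in>Mset lam i. wlam lam phi m * f (j + (m + i) div 2))
        / (\<Sum>m\<in>Mset lam i. wlam lam phi m))"

definition uniformly_convergent_scheme :: "((int \<Rightarrow> real) \<Rightarrow> (int \<Rightarrow> real)) \<Rightarrow> bool" where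
  "uniformly_convergent_scheme S \<longleftrightarrow>
     (\<forall>f0::int \<Rightarrow> real. bounded (range f0) \<longrightarrow>
        (\<exists>F::real \<Rightarrow> real. continuous_on UNIV F \<and>
           (\<forall>e>0. \<exists>K. \<forall>k\<ge>K. \<forall>j. \<bar>(S ^^ k) f0 j - F (real_of_int j / 2 ^ k)\<bar> \<le> e)))"

end

theory Submission
  imports Defs
begin

text \<open>
  One step of the scheme replaces the value at \<open>n\<close> by a convex combination of the values at the
  indices \<open>k\<close> with \<open>|2k - n| \<le> \<lambda>\<close>, in which the index nearest to \<open>n/2\<close> carries weight at
  least \<open>\<delta> > 0\<close>. After \<open>L\<close> steps, with \<open>2^L > R \<ge> 2\<lambda>\<close>, two values at distance at most
  \<open>R\<close> are averages over one window of diameter at most \<open>R\<close> that share an index carrying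
  weight at least \<open>\<delta>^L\<close> in both; so the oscillation of \<open>S^L f\<close> at distance \<open>R\<close> is at most
  \<open>1 - \<delta>^L\<close> times that of \<open>f\<close>, and it decays geometrically along the iterates. Consecutive
  levels differ by at most this oscillation, hence the step functions
  \<open>x \<mapsto> (S^k f) \<lfloor>2^k x\<rfloor>\<close> converge uniformly, and their limit is continuous because their
  oscillation at scale \<open>2^-k\<close> tends to \<open>0\<close>.
\<close>

lemma floor_diff_le_1:
  fixes x y :: real
  assumes "\<bar>x - y\<bar> < 1"
  shows "\<bar>\<lfloor>x\<rfloor> - \<lfloor>y\<rfloor>\<bar> \<le> 1"
proof -
  have "real_of_int \<lfloor>x\<rfloor> < real_of_int (\<lfloor>y\<rfloor> + 2)" "real_of_int \<lfloor>y\<rfloor> < real_of_int (\<lfloor>x\<rfloor> + 2)"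
    using assms by linarith+
  then show ?thesis by linarith
qed

lemma floor_double_diff_le_1:
  fixes y :: real
  shows "\<bar>\<lfloor>2 * y\<rfloor> - 2 * \<lfloor>y\<rfloor>\<bar> \<le> 1"
proof -
  have "real_of_int (2 * \<lfloor>y\<rfloor>) < real_of_int (\<lfloor>2 * y\<rfloor> + 1)"
    "real_of_int \<lfloor>2 * y\<rfloor> < real_of_int (2 * \<lfloor>y\<rfloor> + 2)"
    by linarith+
  then show ?thesis by linarith
qed

lemma exists_near_half_index:
  fixes m n P :: int
  assumes "\<bar>2 * m - n\<bar> \<le> 2 * P - 1"
  shows "\<exists>j. \<bar>2 * j - n\<bar> \<le> 1 \<and> \<bar>m - j\<bar> \<le> P - 1"
  using assms by presburger

lemma uniform_limit_of_geometric_increments: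
  fixes g :: "nat \<Rightarrow> 'a \<Rightarrow> real"
  assumes s: "0 \<le> s" "s < 1" and incr: "\<And>k x. \<bar>g (Suc k) x - g k x\<bar> \<le> K * s ^ k"
  shows "\<exists>F. uniform_limit UNIV g F sequentially"
proof -
  have summable: "summable (\<lambda>k. K * s ^ k)"
    using s by (intro summable_mult summable_geometric) simp
  have "uniform_limit UNIV (\<lambda>n x. \<Sum>k<n. g (Suc k) x - g k x)
      (\<lambda>x. \<Sum>k. g (Suc k) x - g k x) sequentially"
    by (rule Weierstrass_m_test[OF _ summable]) (simp add: incr)
  then have "uniform_limit UNIV (\<lambda>n x. g 0 x + (\<Sum>k<n. g (Suc k) x - g k x))
      (\<lambda>x. g 0 x + (\<Sum>k. g (Suc k) x - g k x)) sequentially"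
    by (intro uniform_limit_add uniform_limit_const)
  moreover have "(\<lambda>n x. g 0 x + (\<Sum>k<n. g (Suc k) x - g k x)) = g"
    by (simp add: sum_lessThan_telescope[of "\<lambda>k. g k _"])
  ultimately show ?thesis by metis
qed

lemma continuous_on_uniform_limit_of_vanishing_oscillation:
  fixes g :: "nat \<Rightarrow> 'a::metric_space \<Rightarrow> real"
  assumes lim: "uniform_limit UNIV g F sequentially"
    and scale: "\<And>k. 0 < d k"
    and osc: "\<And>k x y. dist x y < d k \<Longrightarrow> \<bar>g k x - g k y\<bar> \<le> c k"
    and c: "c \<longlonglongrightarrow> 0"
  shows "continuous_on UNIV F"
  unfolding continuous_on_iff
proof (intro ballI allI impI)
  fix x and e :: real assume e: "0 < e"
  have "\<forall>\<^sub>F k in sequentially. (\<forall>y\<in>UNIV. dist (g k y) (F y) < e / 3) \<and> dist (c k) 0 < e / 3"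
    using e by (intro eventually_conj uniform_limitD[OF lim] tendstoD[OF c]) simp_all
  then obtain k where k: "\<And>y. dist (g k y) (F y) < e / 3" and ck: "dist (c k) 0 < e / 3"
    using eventually_happens'[OF sequentially_bot] by blast
  show "\<exists>d>0. \<forall>y\<in>UNIV. dist y x < d \<longrightarrow> dist (F y) (F x) < e"
  proof (intro exI[of _ "d k"] conjI ballI impI scale)
    fix y assume "dist y x < d k"
    then have "\<bar>g k y - g k x\<bar> \<le> c k" by (rule osc)
    then show "dist (F y) (F x) < e"
      using k[of x] k[of y] ck unfolding dist_real_def by linarith
  qed
qed

definition osc_le :: "int \<Rightarrow> (int \<Rightarrow> real) \<Rightarrow> real \<Rightarrow> bool" where
  "osc_le R f c \<longleftrightarrow> (\<forall>k k'. \<bar>k - k'\<bar> \<le> R \<longrightarrow> \<bar>f k - f k'\<bar> \<le> c)"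

lemma osc_le_nonneg: "osc_le R f c \<Longrightarrow> 0 \<le> R \<Longrightarrow> 0 \<le> c"
  unfolding osc_le_def by (metis abs_ge_zero abs_zero diff_self order.trans)

lemma osc_le_mono: "osc_le R f c \<Longrightarrow> c \<le> c' \<Longrightarrow> osc_le R f c'"
  unfolding osc_le_def by (meson order_trans)

lemma osc_le_obtains_interval:
  assumes osc: "osc_le R f c" and diam: "\<And>k k'. k \<in> U \<Longrightarrow> k' \<in> U \<Longrightarrow> \<bar>k - k'\<bar> \<le> R"
  obtains a where "\<And>k. k \<in> U \<Longrightarrow> a \<le> f k \<and> f k \<le> a + c"
proof (cases "U = {}")
  case False
  then obtain k1 where k1: "k1 \<in> U" by blast
  have "U \<subseteq> {k1 - R..k1 + R}"
    using diam[OF _ k1] by (force simp: abs_le_iff)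
  then have "finite U" by (rule finite_subset) simp
  then have "Min (f ` U) \<in> f ` U" using False by simp
  then obtain km where km: "km \<in> U" "f km = Min (f ` U)" by (metis imageE)
  show ?thesis
  proof (rule that)
    fix k assume k: "k \<in> U"
    have "f km \<le> f k" using km \<open>finite U\<close> k by simp
    moreover have "\<bar>f k - f km\<bar> \<le> c" using osc diam[OF k km(1)] unfolding osc_le_def by blast
    ultimately show "f km \<le> f k \<and> f k \<le> f km + c" by linarith
  qed
qed simp

lemma osc_le_at_scaled_floors:
  fixes x y :: real
  assumes "osc_le R f c" "1 \<le> R" "dist x y < 1 / 2 ^ k"
  shows "\<bar>f \<lfloor>2 ^ k * x\<rfloor> - f \<lfloor>2 ^ k * y\<rfloor>\<bar> \<le> c"
proof -
  have "\<bar>2 ^ k * x - 2 ^ k * y\<bar> = 2 ^ k * dist x y"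
    by (simp add: dist_real_def abs_mult flip: right_diff_distrib)
  also have "\<dots> < 1" using assms(3) by (simp add: field_simps)
  finally have "\<bar>\<lfloor>2 ^ k * x\<rfloor> - \<lfloor>2 ^ k * y\<rfloor>\<bar> \<le> R"
    using floor_diff_le_1 assms(2) by (meson order_trans)
  then show ?thesis using assms(1) unfolding osc_le_def by blast
qed

lemma bounded_range_osc_le:
  assumes "bounded (range f)"
  shows "\<exists>c. osc_le R f c"
proof -
  obtain B where B: "\<And>k. \<bar>f k\<bar> \<le> B"
    using assms unfolding bounded_iff by auto
  have "\<bar>f k - f k'\<bar> \<le> 2 * B" for k k'
    using abs_triangle_ineq4[of "f k" "f k'"] B[of k] B[of k'] by linarith
  then show ?thesis unfolding osc_le_def by blast
qed

text \<open>
  \<open>S f n\<close> is thought of as a weighted average of the values \<open>f k\<close> with \<open>|2k - n| \<le> r\<close>, in which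
  each \<open>f j\<close> with \<open>|2j - n| \<le> 1\<close> has weight at least \<open>\<delta>\<close>. Only the consequence
  \<open>step_bounds\<close> of this is ever used, so it is taken as the axiom.
\<close>

locale local_averaging =
  fixes S :: "(int \<Rightarrow> real) \<Rightarrow> int \<Rightarrow> real" and r \<delta> :: real
  assumes radius_gt_1: "1 < r"
    and weight_pos: "0 < \<delta>" and weight_less_1: "\<delta> < 1"
    and step_bounds: "\<And>f a b n j.
      (\<And>k. \<bar>2 * real_of_int k - real_of_int n\<bar> \<le> r \<Longrightarrow> a \<le> f k \<and> f k \<le> b) \<Longrightarrow>
      \<bar>2 * j - n\<bar> \<le> 1 \<Longrightarrow> a + \<delta> * (f j - a) \<le> S f n \<and> S f n \<le> b - \<delta> * (b - f j)"
begin

text \<open>\<open>(S ^^ L) f n\<close> depends only on the values of \<open>f\<close> on \<open>window L n\<close>.\<close>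

definition window :: "nat \<Rightarrow> int \<Rightarrow> int set" where
  "window L n = {k. \<bar>2 ^ L * real_of_int k - real_of_int n\<bar> \<le> r * (2 ^ L - 1)}"

lemma near_index_within_radius:
  assumes "\<bar>2 * j - n\<bar> \<le> 1"
  shows "\<bar>2 * real_of_int j - real_of_int n\<bar> \<le> r"
proof -
  have "real_of_int \<bar>2 * j - n\<bar> \<le> 1" using assms by linarith
  then show ?thesis using radius_gt_1 by simp
qed

lemma step_range:
  assumes "\<And>k. \<bar>2 * real_of_int k - real_of_int n\<bar> \<le> r \<Longrightarrow> a \<le> f k \<and> f k \<le> b"
  shows "a \<le> S f n \<and> S f n \<le> b"
proof -
  define j where "j = (n + 1) div 2"
  have j: "\<bar>2 * j - n\<bar> \<le> 1" unfolding j_def by presburger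
  then have "a \<le> f j \<and> f j \<le> b" by (intro assms near_index_within_radius)
  then have "0 \<le> \<delta> * (f j - a)" "0 \<le> \<delta> * (b - f j)" using weight_pos by simp_all
  then show ?thesis using step_bounds[where f = f, OF assms j] by linarith
qed

lemma window_Suc:
  assumes j: "\<bar>2 * real_of_int j - real_of_int n\<bar> \<le> r" and k: "k \<in> window L j"
  shows "k \<in> window (Suc L) n"
proof -
  have "2 ^ Suc L * real_of_int k - real_of_int n
      = 2 * (2 ^ L * real_of_int k - real_of_int j) + (2 * real_of_int j - real_of_int n)"
    by (simp add: algebra_simps)
  then have "\<bar>2 ^ Suc L * real_of_int k - real_of_int n\<bar> \<le> 2 * (r * (2 ^ L - 1)) + r"
    using j k unfolding window_def by (simp add: abs_triangle_ineq[THEN order_trans])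
  also have "\<dots> = r * (2 ^ Suc L - 1)" by (simp add: algebra_simps)
  finally show ?thesis unfolding window_def by simp
qed

lemma iterate_range:
  assumes "\<And>k. k \<in> window L n \<Longrightarrow> a \<le> f k \<and> f k \<le> b"
  shows "a \<le> (S ^^ L) f n \<and> (S ^^ L) f n \<le> b"
  using assms
proof (induction L arbitrary: n)
  case 0
  have "n \<in> window 0 n" by (simp add: window_def)
  then show ?case using 0 by simp
next
  case (Suc L)
  have "a \<le> (S ^^ L) f j \<and> (S ^^ L) f j \<le> b" if "\<bar>2 * real_of_int j - real_of_int n\<bar> \<le> r" for j
    using Suc window_Suc[OF that] by blast
  then show ?case using step_range[of n a "(S ^^ L) f" b] by simp
qed

lemma iterate_bounds:
  assumes "\<And>k. k \<in> window L n \<Longrightarrow> a \<le> f k \<and> f k \<le> b"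
    and "\<bar>2 ^ L * k0 - n\<bar> \<le> 2 ^ L - 1"
  shows "a + \<delta> ^ L * (f k0 - a) \<le> (S ^^ L) f n \<and> (S ^^ L) f n \<le> b - \<delta> ^ L * (b - f k0)"
  using assms
proof (induction L arbitrary: n)
  case 0
  then show ?case by simp
next
  case (Suc L)
  define h where "h = (S ^^ L) f"
  have "\<bar>2 * (2 ^ L * k0) - n\<bar> \<le> 2 * 2 ^ L - 1" using Suc.prems(2) by (simp add: mult.assoc)
  then obtain j where j: "\<bar>2 * j - n\<bar> \<le> 1" "\<bar>2 ^ L * k0 - j\<bar> \<le> 2 ^ L - 1"
    using exists_near_half_index by blast
  have j_window: "window L j \<subseteq> window (Suc L) n"
    using window_Suc[OF near_index_within_radius[OF j(1)]] by blast
  have hj: "a + \<delta> ^ L * (f k0 - a) \<le> h j" "h j \<le> b - \<delta> ^ L * (b - f k0)"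
    using Suc.IH[OF _ j(2)] Suc.prems(1) j_window unfolding h_def by blast+
  have "a \<le> h k \<and> h k \<le> b" if "\<bar>2 * real_of_int k - real_of_int n\<bar> \<le> r" for k
    unfolding h_def using iterate_range Suc.prems(1) window_Suc[OF that] by blast
  then have Sh: "a + \<delta> * (h j - a) \<le> S h n" "S h n \<le> b - \<delta> * (b - h j)"
    using step_bounds[OF _ j(1)] by blast+
  have "\<delta> * (\<delta> ^ L * (f k0 - a)) \<le> \<delta> * (h j - a)" "\<delta> * (\<delta> ^ L * (b - f k0)) \<le> \<delta> * (b - h j)"
    using hj weight_pos by (simp_all add: mult_left_mono)
  then show ?case using Sh unfolding h_def by (simp add: mult.assoc)
qed

lemma window_diameter:
  assumes R: "2 * r \<le> real_of_int R" and nn': "\<bar>n - n'\<bar> \<le> R"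
    and k: "k \<in> window L n \<union> window L n'" and k': "k' \<in> window L n \<union> window L n'"
  shows "\<bar>k - k'\<bar> \<le> R"
proof -
  define P :: real where "P = 2 ^ L"
  have P: "1 \<le> P" unfolding P_def by simp
  have near_centre:
    "\<bar>2 * P * real_of_int x - (real_of_int n + real_of_int n')\<bar> \<le> 2 * r * (P - 1) + real_of_int R"
    if "x \<in> window L n \<union> window L n'" for x
  proof -
    have "\<bar>real_of_int n - real_of_int n'\<bar> \<le> real_of_int R" using nn' by linarith
    then show ?thesis using that unfolding window_def P_def[symmetric] by (auto simp: abs_le_iff; linarith)
  qed
  have "\<bar>2 * P * real_of_int k - 2 * P * real_of_int k'\<bar> = \<bar>2 * P\<bar> * \<bar>real_of_int k - real_of_int k'\<bar>"
    by (simp only: abs_mult[symmetric] right_diff_distrib)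
  then have "2 * (P * \<bar>real_of_int k - real_of_int k'\<bar>) = \<bar>2 * P * real_of_int k - 2 * P * real_of_int k'\<bar>"
    using P by simp
  also have "\<dots> \<le> 2 * (2 * r * (P - 1) + real_of_int R)"
    using near_centre[OF k] near_centre[OF k'] by (auto simp: abs_le_iff; linarith)
  finally have "P * \<bar>real_of_int k - real_of_int k'\<bar> \<le> 2 * r * (P - 1) + real_of_int R" by simp
  also have "\<dots> \<le> real_of_int R * (P - 1) + real_of_int R"
    using R P by (simp add: mult_right_mono)
  also have "\<dots> = P * real_of_int R" by (simp add: algebra_simps)
  finally have "\<bar>real_of_int k - real_of_int k'\<bar> \<le> real_of_int R" using P by simp
  then show ?thesis by linarith
qed

lemma osc_le_iterate:
  assumes R: "2 * r \<le> real_of_int R" and osc: "osc_le R f c"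
  shows "osc_le R ((S ^^ L) f) c"
  unfolding osc_le_def
proof (intro allI impI)
  fix n n' assume nn': "\<bar>n - n'\<bar> \<le> R"
  obtain a where a: "\<And>k. k \<in> window L n \<union> window L n' \<Longrightarrow> a \<le> f k \<and> f k \<le> a + c"
    using osc_le_obtains_interval[OF osc, where U = "window L n \<union> window L n'"]
      window_diameter[OF R nn'] by blast
  then show "\<bar>(S ^^ L) f n - (S ^^ L) f n'\<bar> \<le> c"
    using iterate_range[of L n a f "a + c"] iterate_range[of L n' a f "a + c"] by fastforce
qed

lemma osc_le_iterate_contract:
  assumes R: "2 * r \<le> real_of_int R" and L: "R + 1 \<le> 2 ^ L" and osc: "osc_le R f c"
  shows "osc_le R ((S ^^ L) f) ((1 - \<delta> ^ L) * c)"
  unfolding osc_le_def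
proof (intro allI impI)
  fix n n' assume nn': "\<bar>n - n'\<bar> \<le> R"
  obtain a where a: "\<And>k. k \<in> window L n \<union> window L n' \<Longrightarrow> a \<le> f k \<and> f k \<le> a + c"
    using osc_le_obtains_interval[OF osc, where U = "window L n \<union> window L n'"]
      window_diameter[OF R nn'] by blast
  txt \<open>An index \<open>k0\<close> with \<open>2^L k0\<close> within \<open>2^L - 1\<close> of both \<open>n\<close> and \<open>n'\<close> enters both
    averages with weight at least \<open>\<delta>^L\<close>.\<close>
  define Q :: int where "Q = 2 ^ L"
  define k0 where "k0 = (min n n' + Q - 1) div Q"
  define t where "t = (min n n' + Q - 1) mod Q"
  have "Q * k0 + t = min n n' + Q - 1"
    unfolding k0_def t_def by (rule mult_div_mod_eq)
  moreover have "0 \<le> t" "t < Q"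
    unfolding t_def Q_def by simp_all
  moreover have "R + 1 \<le> Q" using L unfolding Q_def .
  ultimately have "\<bar>Q * k0 - n\<bar> \<le> Q - 1" "\<bar>Q * k0 - n'\<bar> \<le> Q - 1"
    using nn' unfolding min_def abs_le_iff by (auto split: if_splits)
  then have bounds: "a + \<delta> ^ L * (f k0 - a) \<le> (S ^^ L) f m
      \<and> (S ^^ L) f m \<le> a + c - \<delta> ^ L * (a + c - f k0)" if "m = n \<or> m = n'" for m
    using that iterate_bounds[of L _ a f "a + c" k0] a unfolding Q_def by auto
  have "a + c - \<delta> ^ L * (a + c - f k0) - (a + \<delta> ^ L * (f k0 - a)) = (1 - \<delta> ^ L) * c"
    by (simp add: algebra_simps)
  then show "\<bar>(S ^^ L) f n - (S ^^ L) f n'\<bar> \<le> (1 - \<delta> ^ L) * c"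
    using bounds[OF disjI1[OF refl]] bounds[OF disjI2[OF refl]] unfolding abs_le_iff by linarith
qed

lemma osc_le_iterate_geometric:
  assumes R: "2 * r \<le> real_of_int R" and osc: "osc_le R f c"
  obtains K s where "0 \<le> s" "s < 1" "\<And>m. osc_le R ((S ^^ m) f) (K * s ^ m)"
proof -
  define L where "L = nat R"
  have "2 < R" using R radius_gt_1 by linarith
  moreover have "int (nat R) < int (2 ^ nat R)"
    using less_exp of_nat_less_iff by blast
  ultimately have L: "1 \<le> L" "R + 1 \<le> 2 ^ L"
    unfolding L_def by simp_all
  define \<rho> where "\<rho> = 1 - \<delta> ^ L"
  have \<rho>: "0 < \<rho>" "\<rho> < 1"
    unfolding \<rho>_def using weight_pos weight_less_1 L(1) by (simp_all add: power_less_one_iff)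
  define s where "s = root L \<rho>"
  have s: "0 < s" "s < 1" "s ^ L = \<rho>" unfolding s_def using L(1) \<rho> by simp_all
  define K where "K = c / \<rho>"
  have "0 \<le> c" using osc_le_nonneg[OF osc] \<open>2 < R\<close> by simp
  then have K: "0 \<le> K" unfolding K_def using \<rho> by simp
  have "osc_le R ((S ^^ m) f) (K * s ^ m)" for m
  proof (induction m rule: less_induct)
    case (less m)
    show ?case
    proof (cases "m < L")
      case True
      have "c = K * s ^ L" unfolding K_def s(3) using \<rho> by simp
      also have "\<dots> \<le> K * s ^ m" using True s K by (intro mult_left_mono power_decreasing) auto
      finally show ?thesis using osc_le_mono[OF osc_le_iterate[OF R osc]] by blast
    next
      case False
      then obtain d where m: "m = L + d" by (metis le_Suc_ex not_less)
      have "osc_le R ((S ^^ d) f) (K * s ^ d)" using less.IH L(1) m by simp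
      then have "osc_le R ((S ^^ L) ((S ^^ d) f)) (\<rho> * (K * s ^ d))"
        unfolding \<rho>_def by (rule osc_le_iterate_contract[OF R L(2)])
      moreover have "\<rho> * (K * s ^ d) = K * s ^ m" unfolding m s(3)[symmetric] by (simp add: power_add)
      ultimately show ?thesis unfolding m by (simp add: funpow_add)
    qed
  qed
  then show ?thesis using that[of s K] s by simp
qed

lemma step_close:
  assumes R: "2 * r \<le> real_of_int R" and osc: "osc_le R f c" and m: "\<bar>m - 2 * n\<bar> \<le> 1"
  shows "\<bar>S f m - f n\<bar> \<le> c"
proof -
  have "f n - c \<le> f k \<and> f k \<le> f n + c" if "\<bar>2 * real_of_int k - real_of_int m\<bar> \<le> r" for k
  proof -
    have "\<bar>real_of_int m - 2 * real_of_int n\<bar> \<le> 1" using m by linarith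
    then have "\<bar>k - n\<bar> \<le> R" using that R radius_gt_1 by (auto simp: abs_le_iff)
    then have "\<bar>f k - f n\<bar> \<le> c" using osc unfolding osc_le_def by blast
    then show ?thesis by linarith
  qed
  then have "f n - c \<le> S f m \<and> S f m \<le> f n + c" by (rule step_range)
  then show ?thesis by linarith
qed

lemma iterate_Suc_close:
  fixes x :: real
  assumes R: "2 * r \<le> real_of_int R" and osc: "osc_le R ((S ^^ k) f) c"
  shows "\<bar>(S ^^ Suc k) f \<lfloor>2 ^ Suc k * x\<rfloor> - (S ^^ k) f \<lfloor>2 ^ k * x\<rfloor>\<bar> \<le> c"
proof -
  have "(S ^^ Suc k) f = S ((S ^^ k) f)" "(2::real) ^ Suc k * x = 2 * (2 ^ k * x)" by simp_all
  then show ?thesis using step_close[OF R osc floor_double_diff_le_1, of "2 ^ k * x"] by (simp only:)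
qed

theorem uniformly_convergent: "uniformly_convergent_scheme S"
  unfolding uniformly_convergent_scheme_def
proof (intro allI impI)
  fix f0 :: "int \<Rightarrow> real" assume "bounded (range f0)"
  define R where "R = \<lceil>2 * r\<rceil>"
  have R: "2 * r \<le> real_of_int R" unfolding R_def by simp
  obtain c where "osc_le R f0 c" using bounded_range_osc_le[OF \<open>bounded (range f0)\<close>] by blast
  then obtain K s where s: "0 \<le> s" "s < 1" and osc: "\<And>m. osc_le R ((S ^^ m) f0) (K * s ^ m)"
    using osc_le_iterate_geometric[OF R] by blast
  define g where "g k x = (S ^^ k) f0 \<lfloor>2 ^ k * x\<rfloor>" for k :: nat and x :: real
  have "\<bar>g (Suc k) x - g k x\<bar> \<le> K * s ^ k" for k x
    unfolding g_def by (rule iterate_Suc_close[OF R osc])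
  then obtain F where F: "uniform_limit UNIV g F sequentially"
    using uniform_limit_of_geometric_increments[OF s] by blast
  have "1 \<le> R" using R radius_gt_1 by linarith
  then have "\<bar>g k x - g k y\<bar> \<le> K * s ^ k" if "dist x y < 1 / 2 ^ k" for k x y
    unfolding g_def using osc_le_at_scaled_floors[OF osc _ that] by blast
  moreover have "(\<lambda>k. K * s ^ k) \<longlonglongrightarrow> 0"
    using s by (intro tendsto_mult_right_zero LIMSEQ_power_zero) simp
  ultimately have "continuous_on UNIV F"
    by (intro continuous_on_uniform_limit_of_vanishing_oscillation[OF F, of "\<lambda>k. 1 / 2 ^ k"]) simp_all
  moreover have "\<exists>N. \<forall>k\<ge>N. \<forall>j. \<bar>(S ^^ k) f0 j - F (real_of_int j / 2 ^ k)\<bar> \<le> e" if "0 < e" for e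
  proof -
    obtain N where N: "\<And>k x. N \<le> k \<Longrightarrow> dist (g k x) (F x) < e"
      using F \<open>0 < e\<close> unfolding uniform_limit_sequentially_iff by blast
    have "g k (real_of_int j / 2 ^ k) = (S ^^ k) f0 j" for k j by (simp add: g_def)
    then show ?thesis using N by (metis dist_real_def less_imp_le)
  qed
  ultimately show "\<exists>F. continuous_on UNIV F \<and>
      (\<forall>e>0. \<exists>N. \<forall>k\<ge>N. \<forall>j. \<bar>(S ^^ k) f0 j - F (real_of_int j / 2 ^ k)\<bar> \<le> e)"
    by blast
qed

end

lemma weighted_average_bounds:
  fixes w x :: "'a \<Rightarrow> real"
  assumes M: "finite M" "m0 \<in> M"
    and w: "\<And>m. m \<in> M \<Longrightarrow> 0 \<le> w m" "0 < w m0"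
    and x: "\<And>m. m \<in> M \<Longrightarrow> a \<le> x m \<and> x m \<le> b"
    and \<delta>: "\<delta> \<le> w m0 / (\<Sum>m\<in>M. w m)"
  shows "a + \<delta> * (x m0 - a) \<le> (\<Sum>m\<in>M. w m * x m) / (\<Sum>m\<in>M. w m)
    \<and> (\<Sum>m\<in>M. w m * x m) / (\<Sum>m\<in>M. w m) \<le> b - \<delta> * (b - x m0)"
proof -
  define W where "W = (\<Sum>m\<in>M. w m)"
  have W: "0 < W" unfolding W_def using M w by (metis sum_pos2)
  have "w m0 * (x m0 - a) \<le> (\<Sum>m\<in>M. w m * (x m - a))"
    using M w x by (intro member_le_sum) auto
  also have "\<dots> = (\<Sum>m\<in>M. w m * x m) - a * W"
    unfolding W_def by (simp add: algebra_simps sum_subtractf sum_distrib_left)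
  finally have "w m0 * (x m0 - a) / W \<le> ((\<Sum>m\<in>M. w m * x m) - a * W) / W"
    using W by (simp add: divide_right_mono)
  then have lower: "w m0 / W * (x m0 - a) \<le> (\<Sum>m\<in>M. w m * x m) / W - a"
    using W by (simp add: diff_divide_distrib)
  have "w m0 * (b - x m0) \<le> (\<Sum>m\<in>M. w m * (b - x m))"
    using M w x by (intro member_le_sum) auto
  also have "\<dots> = b * W - (\<Sum>m\<in>M. w m * x m)"
    unfolding W_def by (simp add: algebra_simps sum_subtractf sum_distrib_left)
  finally have "w m0 * (b - x m0) / W \<le> (b * W - (\<Sum>m\<in>M. w m * x m)) / W"
    using W by (simp add: divide_right_mono)
  then have upper: "w m0 / W * (b - x m0) \<le> b - (\<Sum>m\<in>M. w m * x m) / W"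
    using W by (simp add: diff_divide_distrib)
  have "\<delta> * (x m0 - a) \<le> w m0 / W * (x m0 - a)" "\<delta> * (b - x m0) \<le> w m0 / W * (b - x m0)"
    using \<delta> x[OF M(2)] unfolding W_def by (intro mult_right_mono; simp)+
  then show ?thesis using lower upper unfolding W_def by linarith
qed

lemma Mset_subset: "Mset lam i \<subseteq> {-\<lceil>lam\<rceil>..\<lceil>lam\<rceil>}"
  unfolding Mset_def by (auto simp: abs_less_iff) linarith+

lemma Sstep_eq:
  "Sstep lam phi f n = (\<Sum>m\<in>Mset lam (n mod 2). wlam lam phi m * f ((n + m) div 2))
      / (\<Sum>m\<in>Mset lam (n mod 2). wlam lam phi m)"
proof -
  have "n div 2 + (m + n mod 2) div 2 = (n + m) div 2" for m :: int by presburger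
  then show ?thesis unfolding Sstep_def Let_def by simp
qed

lemma wlam_bounds:
  assumes "1 < lam" and phi: "\<And>x. x \<in> {0..1} \<Longrightarrow> 0 < phi x \<and> phi x \<le> 1"
    and mono: "antimono_on {0..1} phi" and m: "m \<in> Mset lam i"
  shows "phi 1 \<le> wlam lam phi m \<and> wlam lam phi m \<le> 1"
proof -
  have "\<bar>real_of_int m\<bar> / lam \<in> {0..1}" using m \<open>1 < lam\<close> by (simp add: Mset_def)
  then show ?thesis unfolding wlam_def using phi monotone_onD[OF mono] by auto
qed

lemma sum_wlam_le:
  assumes lam: "1 < lam" and phi: "\<And>x. x \<in> {0..1} \<Longrightarrow> 0 < phi x \<and> phi x \<le> 1"
    and mono: "antimono_on {0..1} phi"
  shows "(\<Sum>m\<in>Mset lam i. wlam lam phi m) \<le> of_int (2 * \<lceil>lam\<rceil> + 1)"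
proof -
  have "card (Mset lam i) \<le> card {-\<lceil>lam\<rceil>..\<lceil>lam\<rceil>}"
    by (intro card_mono) (simp_all add: Mset_subset)
  moreover have "0 \<le> 2 * \<lceil>lam\<rceil> + 1" using lam by linarith
  ultimately have "int (card (Mset lam i)) \<le> 2 * \<lceil>lam\<rceil> + 1" by (simp add: le_nat_iff)
  then have "real (card (Mset lam i)) \<le> of_int (2 * \<lceil>lam\<rceil> + 1)"
    by (metis of_int_le_iff of_int_of_nat_eq)
  moreover have "(\<Sum>m\<in>Mset lam i. wlam lam phi m) \<le> of_nat (card (Mset lam i)) * 1"
    using wlam_bounds[OF lam phi mono] by (intro sum_bounded_above) blast
  ultimately show ?thesis by simp
qed

lemma near_index_in_Mset:
  assumes "1 < lam" "\<bar>2 * j - n\<bar> \<le> 1"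
  shows "2 * j - n \<in> Mset lam (n mod 2)"
proof -
  have "\<bar>real_of_int (2 * j - n)\<bar> \<le> 1" using assms(2) by linarith
  then show ?thesis unfolding Mset_def using assms(1) by auto presburger
qed

lemma Mset_index_within_radius:
  assumes "m \<in> Mset lam (n mod 2)"
  shows "\<bar>2 * real_of_int ((n + m) div 2) - real_of_int n\<bar> \<le> lam"
proof -
  have "m mod 2 = n mod 2" "\<bar>real_of_int m\<bar> < lam" using assms by (auto simp: Mset_def)
  moreover from this(1) have "2 * ((n + m) div 2) - n = m" by presburger
  ultimately show ?thesis by (metis of_int_diff of_int_mult of_int_numeral less_imp_le)
qed

lemma local_averaging_Sstep:
  assumes lam: "1 < lam" and phi: "\<And>x. x \<in> {0..1} \<Longrightarrow> 0 < phi x \<and> phi x \<le> 1"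
    and mono: "antimono_on {0..1} phi"
  shows "local_averaging (Sstep lam phi) lam (phi 1 / of_int (2 * \<lceil>lam\<rceil> + 1))"
proof
  txt \<open>Every weight is at least \<open>phi 1\<close>, and there are at most \<open>2\<lceil>\<lambda>\<rceil> + 1\<close> of them.\<close>
  define N where "N = 2 * \<lceil>lam\<rceil> + 1"
  have N: "3 \<le> real_of_int N" unfolding N_def using lam by linarith
  have phi1: "0 < phi 1" "phi 1 \<le> 1" using phi by auto
  show "1 < lam" by (fact lam)
  show "0 < phi 1 / of_int (2 * \<lceil>lam\<rceil> + 1)"
    unfolding N_def[symmetric] using phi1 N by (intro divide_pos_pos) auto
  show "phi 1 / of_int (2 * \<lceil>lam\<rceil> + 1) < 1"
    unfolding N_def[symmetric] using phi1 N by (subst divide_less_eq_1_pos) auto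
  fix f :: "int \<Rightarrow> real" and a b :: real and n j :: int
  assume H: "\<And>k. \<bar>2 * real_of_int k - real_of_int n\<bar> \<le> lam \<Longrightarrow> a \<le> f k \<and> f k \<le> b"
    and j: "\<bar>2 * j - n\<bar> \<le> 1"
  define M where "M = Mset lam (n mod 2)"
  define w where "w = wlam lam phi"
  define m0 where "m0 = 2 * j - n"
  have M: "finite M" using Mset_subset unfolding M_def by (rule finite_subset) simp
  have m0: "m0 \<in> M" unfolding M_def m0_def using lam j by (rule near_index_in_Mset)
  have w: "phi 1 \<le> w m \<and> w m \<le> 1" if "m \<in> M" for m
    using wlam_bounds[OF lam phi mono] that unfolding w_def M_def by blast
  have w_pos: "0 < w m" if "m \<in> M" for m
    using w[OF that] phi1 by linarith
  have "0 < (\<Sum>m\<in>M. w m)"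
    using M m0 w_pos by (intro sum_pos2[of M m0]) (auto intro: less_imp_le)
  moreover have "(\<Sum>m\<in>M. w m) \<le> N"
    unfolding M_def w_def N_def using lam phi mono by (rule sum_wlam_le)
  ultimately have "phi 1 / of_int N \<le> w m0 / (\<Sum>m\<in>M. w m)"
    using w[OF m0] phi1 by (intro frac_le) auto
  moreover have "a \<le> f ((n + m) div 2) \<and> f ((n + m) div 2) \<le> b" if "m \<in> M" for m
    using that unfolding M_def by (intro H Mset_index_within_radius)
  ultimately have "a + phi 1 / of_int N * (f ((n + m0) div 2) - a) \<le> Sstep lam phi f n
    \<and> Sstep lam phi f n \<le> b - phi 1 / of_int N * (b - f ((n + m0) div 2))"
    unfolding Sstep_eq M_def[symmetric] w_def[symmetric]
    using M m0 w_pos by (intro weighted_average_bounds) (auto intro: less_imp_le)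
  then show "a + phi 1 / of_int (2 * \<lceil>lam\<rceil> + 1) * (f j - a) \<le> Sstep lam phi f n
    \<and> Sstep lam phi f n \<le> b - phi 1 / of_int (2 * \<lceil>lam\<rceil> + 1) * (b - f j)"
    unfolding N_def m0_def by simp
qed

theorem corollary4p2:
  fixes lam :: real and phi :: "real \<Rightarrow> real"
  assumes "lam > 1"
    and "lam \<notin> \<nat>"
    and "\<And>x. x \<in> {0..1} \<Longrightarrow> 0 < phi x \<and> phi x \<le> 1"
    and "antimono_on {0..1} phi"
    and "phi 0 = 1"
  shows "uniformly_convergent_scheme (Sstep lam phi)"
proof -
  interpret local_averaging "Sstep lam phi" lam "phi 1 / of_int (2 * \<lceil>lam\<rceil> + 1)"
    using assms(1,3,4) by (rule local_averaging_Sstep)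
  show ?thesis by (rule uniformly_convergent)
qed

end
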